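(* Let $n\ge 3$ and let $C_n$ be the cycle on $n$ vertices. There exist pairs of vertices $\{a,b\}$ and $\{c,d\}$ of $C_n$, at least one of which is an edge, such that there is perfect pair state transfer between $e_a-e_b$ and $e_c-e_d$ in $C_n$, if and only if $n=4$.
   Context: For a graph with Laplacian $L=\Delta-A$ ($\Delta$ degree matrix, $A$ adjacency matrix), $U(t)=\exp(itL)$. Perfect pair state transfer between $e_a-e_b$ and $e_c-e_d$ (for distinct pairs $\{a,b\}\neq\{c,d\}$ of distinct vertices) means there exist $t\ge0$ and $\gamma\in\mathbb{C}$ with $|\gamma|=1$ such that $U(t)(e_a-e_b)=\gamma(e_c-e_d)$, $e_v$ being the standard basis vector of $v$. *)

theory Defs
  imports Complex_Main
begin

text \<open>Graphs on vertex set {0..<n}; matrices are functions nat => nat => complex,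
  only entries with indices < n are meaningful.\<close>

definition cycle_adj :: "nat \<Rightarrow> nat \<Rightarrow> nat \<Rightarrow> bool" where
  "cycle_adj n i j \<longleftrightarrow> i < n \<and> j < n \<and> i \<noteq> j \<and> (j = (i + 1) mod n \<or> i = (j + 1) mod n)"

definition cycle_laplacian :: "nat \<Rightarrow> nat \<Rightarrow> nat \<Rightarrow> complex" where
  "cycle_laplacian n i j =
     (if i = j then of_nat (card {k. k < n \<and> cycle_adj n i k}) else 0)
     - (if cycle_adj n i j then 1 else 0)"

definition mat_mult :: "nat \<Rightarrow> (nat \<Rightarrow> nat \<Rightarrow> complex) \<Rightarrow> (nat \<Rightarrow> nat \<Rightarrow> complex) \<Rightarrow> nat \<Rightarrow> nat \<Rightarrow> complex" where
  "mat_mult n A B i j = (\<Sum>k<n. A i k * B k j)"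

fun mat_pow :: "nat \<Rightarrow> (nat \<Rightarrow> nat \<Rightarrow> complex) \<Rightarrow> nat \<Rightarrow> nat \<Rightarrow> nat \<Rightarrow> complex" where
  "mat_pow n A 0 = (\<lambda>i j. if i = j then 1 else 0)"
| "mat_pow n A (Suc k) = mat_mult n A (mat_pow n A k)"

definition mat_exp :: "nat \<Rightarrow> (nat \<Rightarrow> nat \<Rightarrow> complex) \<Rightarrow> nat \<Rightarrow> nat \<Rightarrow> complex" where
  "mat_exp n A i j = (\<Sum>k. mat_pow n A k i j / of_nat (fact k))"

definition mat_vec :: "nat \<Rightarrow> (nat \<Rightarrow> nat \<Rightarrow> complex) \<Rightarrow> (nat \<Rightarrow> complex) \<Rightarrow> nat \<Rightarrow> complex" where
  "mat_vec n A x i = (\<Sum>j<n. A i j * x j)"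

definition cycle_U :: "nat \<Rightarrow> real \<Rightarrow> nat \<Rightarrow> nat \<Rightarrow> complex" where
  "cycle_U n t = mat_exp n (\<lambda>i j. \<i> * of_real t * cycle_laplacian n i j)"

definition std_basis :: "nat \<Rightarrow> nat \<Rightarrow> complex" where
  "std_basis v = (\<lambda>i. if i = v then 1 else 0)"

definition pair_pst :: "nat \<Rightarrow> nat \<Rightarrow> nat \<Rightarrow> nat \<Rightarrow> nat \<Rightarrow> bool" where
  "pair_pst n a b c d \<longleftrightarrow>
     (\<exists>t::real. \<exists>\<gamma>::complex. t \<ge> 0 \<and> norm \<gamma> = 1 \<and>
        (\<forall>i<n. mat_vec n (cycle_U n t) (\<lambda>v. std_basis a v - std_basis b v) i
               = \<gamma> * (std_basis c i - std_basis d i)))"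

end

theory Submission
  imports Defs
begin

text \<open>With \<open>\<zeta> = exp (2 \<pi> i / n)\<close>, the characters \<open>j \<mapsto> \<zeta>^(j k)\<close> diagonalise the Laplacian of
  the cycle, with eigenvalues \<open>\<theta>_k = 2 - 2 cos (2 \<pi> k / n)\<close>. Transfer from \<open>e_a - e_b\<close> to \<open>\<gamma> (e_c - e_d)\<close>
  at time \<open>t\<close> thus means \<open>exp (i t \<theta>_k) (\<zeta>^(a k) - \<zeta>^(b k)) = \<gamma> (\<zeta>^(c k) - \<zeta>^(d k))\<close> for all \<open>k\<close>.
  The modes \<open>k = 1\<close> and \<open>k = n - 1\<close> have the same eigenvalue and conjugate characters, which forces
  \<open>{\<zeta>^c, \<zeta>^d} = {-\<zeta>^a, -\<zeta>^b}\<close>. Hence \<open>n\<close> is even and, one of the pairs being an edge,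
  \<open>exp (i t \<theta>_k) = g (-1)^k\<close> for \<open>0 < k < n\<close>. For \<open>n = 2 m\<close> the relation \<open>\<theta>_1 + \<theta>_(m-1) = \<theta>_m\<close>
  gives \<open>g = 1\<close>, so every \<open>t \<theta>_k / \<pi>\<close> is an integer of the parity of \<open>k\<close>. As
  \<open>\<theta>_2 = \<theta>_1 (2 + 2 cos (2 \<pi> / n))\<close>, the number \<open>2 cos (2 \<pi> / n)\<close> is a rational with odd
  denominator and even numerator; a Niven-type argument makes it an even integer, impossible for
  \<open>n \<ge> 6\<close>. For \<open>n = 4\<close>, \<open>e_0 - e_1\<close> splits into eigenvectors for \<open>\<theta> = 4\<close> and \<open>\<theta> = 2\<close> and is sent
  to \<open>e_2 - e_3\<close> at time \<open>\<pi> / 2\<close>.\<close>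

lemma power_mult_swap: "(x ^ m) ^ k = (x ^ k) ^ (m :: nat)" for x :: "'a :: monoid_mult"
  by (simp add: power_mult[symmetric] mult.commute)

lemma unit_mult_cnj: "norm (x :: complex) = 1 \<Longrightarrow> x * cnj x = 1"
  by (simp add: complex_norm_square[symmetric])

lemma root_of_unity_power_pred:
  fixes z :: complex
  assumes "z ^ n = 1" "0 < n"
  shows "z ^ (n - 1) = cnj z"
proof -
  have "z * cnj z = 1"
    using power_eq_1_iff[OF assms(1)] assms(2) by (simp add: unit_mult_cnj)
  then have "z ^ (n - 1) = z ^ (n - 1) * z * cnj z"
    by (simp add: mult.assoc)
  also have "\<dots> = cnj z"
    using assms by (simp add: power_Suc2[symmetric])
  finally show ?thesis .
qed

section \<open>The matrix exponential\<close>

lemma norm_mat_pow_le: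
  assumes "\<And>i j. i < n \<Longrightarrow> j < n \<Longrightarrow> norm (A i j) \<le> B" and "i < n"
  shows "norm (mat_pow n A k i j) \<le> (real n * B) ^ k"
  using \<open>i < n\<close>
proof (induction k arbitrary: i j)
  case 0
  then show ?case by simp
next
  case (Suc k)
  have "norm (mat_pow n A (Suc k) i j) \<le> (\<Sum>l<n. norm (A i l) * norm (mat_pow n A k l j))"
    by (simp add: mat_mult_def norm_mult order.trans[OF norm_sum])
  also have "\<dots> \<le> (\<Sum>l<n. B * (real n * B) ^ k)"
    using assms(1) Suc by (intro sum_mono mult_mono) (auto intro: order.trans[OF norm_ge_zero])
  finally show ?case by simp
qed

lemma summable_mat_exp_series:
  assumes "i < n"
  shows "summable (\<lambda>k. mat_pow n A k i j / of_nat (fact k))"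
proof (rule summable_comparison_test)
  define B where "B = (\<Sum>i<n. \<Sum>j<n. norm (A i j))"
  have "norm (A i j) \<le> B" if "i < n" "j < n" for i j
    unfolding B_def using that
    by (intro order.trans[OF member_le_sum[of j] member_le_sum[of i]]) (auto intro: sum_nonneg)
  then have "norm (mat_pow n A k i j) \<le> (real n * B) ^ k" for k
    using norm_mat_pow_le assms by blast
  then show "\<exists>N. \<forall>k\<ge>N. norm (mat_pow n A k i j / of_nat (fact k)) \<le> (real n * B) ^ k / fact k"
    by (auto simp: norm_divide divide_right_mono)
  show "summable (\<lambda>k. (real n * B) ^ k / fact k)"
    using summable_exp[of "real n * B"] by (simp add: divide_inverse mult.commute)
qed

lemma mat_vec_mat_exp:
  assumes "i < n"
  shows "mat_vec n (mat_exp n A) x i = (\<Sum>k. mat_vec n (mat_pow n A k) x i / of_nat (fact k))"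
proof -
  have "mat_vec n (mat_exp n A) x i = (\<Sum>j<n. \<Sum>k. mat_pow n A k i j / of_nat (fact k) * x j)"
    unfolding mat_vec_def mat_exp_def
    by (intro sum.cong refl suminf_mult2 summable_mat_exp_series assms)
  also have "\<dots> = (\<Sum>k. \<Sum>j<n. mat_pow n A k i j / of_nat (fact k) * x j)"
    by (intro suminf_sum[symmetric] summable_mult2 summable_mat_exp_series assms)
  finally show ?thesis
    by (simp add: mat_vec_def sum_divide_distrib)
qed

lemma summable_mat_vec_exp_series:
  assumes "i < n"
  shows "summable (\<lambda>k. mat_vec n (mat_pow n A k) x i / of_nat (fact k))"
proof -
  have "summable (\<lambda>k. \<Sum>j<n. mat_pow n A k i j / of_nat (fact k) * x j)"
    by (intro summable_sum summable_mult2 summable_mat_exp_series assms)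
  then show ?thesis
    by (simp add: mat_vec_def sum_divide_distrib)
qed

lemma mat_vec_mat_pow_Suc:
  "mat_vec n (mat_pow n A (Suc k)) x = mat_vec n A (mat_vec n (mat_pow n A k) x)"
  by (auto simp: mat_vec_def mat_mult_def sum_distrib_left sum_distrib_right mult.assoc
      intro!: ext sum.swap)

lemma mat_vec_one:
  "i < n \<Longrightarrow> mat_vec n (\<lambda>i j. if i = j then 1 else 0) x i = x i"
  by (simp add: mat_vec_def if_distrib[of "\<lambda>a. a * _"] cong: if_cong)

lemma mat_vec_add: "mat_vec n A (\<lambda>j. x j + y j) i = mat_vec n A x i + mat_vec n A y i"
  by (simp add: mat_vec_def distrib_left sum.distrib)

lemma mat_vec_scale: "mat_vec n (\<lambda>i j. c * A i j) x i = c * mat_vec n A x i"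
  by (simp add: mat_vec_def sum_distrib_left mult.assoc)

lemma mat_vec_cong: "(\<And>j. j < n \<Longrightarrow> x j = y j) \<Longrightarrow> mat_vec n A x i = mat_vec n A y i"
  by (simp add: mat_vec_def)

lemma suminf_exp_series_mult: "(\<Sum>k. \<mu> ^ k * v / fact k) = exp \<mu> * (v :: complex)"
proof -
  have "(\<lambda>k. \<mu> ^ k / fact k) sums exp \<mu>"
    using exp_converges[of \<mu>] by (simp add: scaleR_conv_of_real divide_inverse mult.commute)
  then have "(\<lambda>k. \<mu> ^ k / fact k * v) sums (exp \<mu> * v)"
    by (rule sums_mult2)
  then show ?thesis
    by (simp add: sums_iff)
qed

lemma mat_exp_eigenvector:
  assumes eigen: "\<And>i. i < n \<Longrightarrow> mat_vec n A x i = \<mu> * x i" and "i < n"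
  shows "mat_vec n (mat_exp n A) x i = exp \<mu> * x i"
proof -
  have pow: "mat_vec n (mat_pow n A k) x i = \<mu> ^ k * x i" if "i < n" for i k
    using that
  proof (induction k arbitrary: i)
    case 0
    then show ?case by (simp add: mat_vec_one)
  next
    case (Suc k)
    then have "mat_vec n (mat_pow n A (Suc k)) x i = \<mu> ^ k * mat_vec n A x i"
      unfolding mat_vec_mat_pow_Suc by (simp add: mat_vec_def sum_distrib_left mult.left_commute)
    then show ?case
      using eigen Suc.prems by simp
  qed
  show ?thesis
    using \<open>i < n\<close> by (simp add: mat_vec_mat_exp pow suminf_exp_series_mult)
qed

lemma mat_exp_left_eigenvector:
  assumes eigen: "\<And>j. j < n \<Longrightarrow> (\<Sum>i<n. c i * A i j) = \<mu> * c j"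
  shows "(\<Sum>i<n. c i * mat_vec n (mat_exp n A) x i) = exp \<mu> * (\<Sum>i<n. c i * x i)"
proof -
  have pow: "(\<Sum>i<n. c i * mat_vec n (mat_pow n A k) x i) = \<mu> ^ k * (\<Sum>i<n. c i * x i)" for k
  proof (induction k)
    case 0
    then show ?case by (simp add: mat_vec_one)
  next
    case (Suc k)
    define y where "y = mat_vec n (mat_pow n A k) x"
    have "(\<Sum>i<n. c i * mat_vec n (mat_pow n A (Suc k)) x i) = (\<Sum>i<n. \<Sum>j<n. c i * A i j * y j)"
      unfolding mat_vec_mat_pow_Suc by (simp add: mat_vec_def sum_distrib_left mult.assoc y_def)
    also have "\<dots> = (\<Sum>j<n. (\<Sum>i<n. c i * A i j) * y j)"
      by (subst sum.swap) (simp add: sum_distrib_right)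
    also have "\<dots> = \<mu> * (\<Sum>j<n. c j * y j)"
      by (simp add: eigen sum_distrib_left mult.assoc)
    finally show ?case
      by (simp add: Suc.IH y_def)
  qed
  have "(\<Sum>i<n. c i * mat_vec n (mat_exp n A) x i)
      = (\<Sum>i<n. \<Sum>k. c i * (mat_vec n (mat_pow n A k) x i / of_nat (fact k)))"
    by (intro sum.cong refl)
      (simp only: mat_vec_mat_exp lessThan_iff suminf_mult[OF summable_mat_vec_exp_series])
  also have "\<dots> = (\<Sum>k. \<Sum>i<n. c i * (mat_vec n (mat_pow n A k) x i / of_nat (fact k)))"
    by (intro suminf_sum[symmetric] summable_mult summable_mat_vec_exp_series) simp
  also have "\<dots> = (\<Sum>k. \<mu> ^ k * (\<Sum>i<n. c i * x i) / fact k)"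
    by (simp add: pow sum_divide_distrib[symmetric])
  finally show ?thesis
    by (simp add: suminf_exp_series_mult)
qed

section \<open>The Laplacian of the cycle and its characters\<close>

definition cycle_next :: "nat \<Rightarrow> nat \<Rightarrow> nat" where
  "cycle_next n i = (if Suc i = n then 0 else Suc i)"

definition cycle_prev :: "nat \<Rightarrow> nat \<Rightarrow> nat" where
  "cycle_prev n i = (if i = 0 then n - 1 else i - 1)"

lemma cycle_neighbours:
  assumes "3 \<le> n" "i < n"
  shows "{j. j < n \<and> cycle_adj n i j} = {cycle_next n i, cycle_prev n i}"
    and "cycle_next n i \<noteq> cycle_prev n i"
  using assms by (auto simp: cycle_adj_def cycle_next_def cycle_prev_def mod_Suc split: if_splits)

lemma mat_vec_cycle_laplacian:
  assumes "3 \<le> n" "i < n"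
  shows "mat_vec n (cycle_laplacian n) x i = 2 * x i - x (cycle_next n i) - x (cycle_prev n i)"
proof -
  let ?N = "{j. j < n \<and> cycle_adj n i j}"
  have "card ?N = 2"
    using cycle_neighbours[OF assms] by simp
  then have "mat_vec n (cycle_laplacian n) x i
      = (\<Sum>j<n. if i = j then 2 * x j else 0) - (\<Sum>j<n. if cycle_adj n i j then x j else 0)"
    unfolding mat_vec_def sum_subtractf[symmetric]
    by (intro sum.cong refl) (auto simp: cycle_laplacian_def cycle_adj_def)
  also have "(\<Sum>j<n. if cycle_adj n i j then x j else 0) = sum x ?N"
    by (simp add: sum.inter_filter[symmetric] lessThan_def Collect_conj_eq[symmetric])
  finally show ?thesis
    using assms cycle_neighbours[OF assms] by simp
qed

lemma cycle_laplacian_sym: "cycle_laplacian n i j = cycle_laplacian n j i"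
  by (auto simp: cycle_laplacian_def cycle_adj_def)

lemma mat_vec_cycle_laplacian_root_of_unity:
  fixes z :: complex
  assumes "3 \<le> n" "l < n" "z ^ n = 1"
  shows "mat_vec n (cycle_laplacian n) (\<lambda>j. z ^ j) l = (2 - 2 * Re z) * z ^ l"
proof -
  have "z * cnj z = 1"
    using power_eq_1_iff[OF \<open>z ^ n = 1\<close>] assms(1) by (simp add: unit_mult_cnj)
  moreover have "z ^ (m - 1) * z = z ^ m" if "0 < m" for m
    using that by (metis Suc_diff_1 power_Suc2)
  then have "z ^ cycle_prev n l * z = z ^ l" "z ^ cycle_next n l = z ^ l * z"
    using assms by (auto simp: cycle_prev_def cycle_next_def mult.commute)
  ultimately have "z ^ cycle_prev n l = z ^ l * cnj z" "z ^ cycle_next n l = z ^ l * z"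
    by (metis mult.assoc mult.commute mult_1_right)+
  then have "mat_vec n (cycle_laplacian n) (\<lambda>j. z ^ j) l = (2 - (z + cnj z)) * z ^ l"
    unfolding mat_vec_cycle_laplacian[OF assms(1,2)] by (simp add: algebra_simps)
  then show ?thesis
    by (simp add: complex_add_cnj)
qed

lemma cycle_U_eigenvector:
  assumes "i < n" and eigen: "\<And>i. i < n \<Longrightarrow> mat_vec n (cycle_laplacian n) x i = \<theta> * x i"
  shows "mat_vec n (cycle_U n t) x i = cis (t * \<theta>) * x i"
  unfolding cycle_U_def cis_conv_exp
proof (rule mat_exp_eigenvector[OF _ \<open>i < n\<close>])
  fix i assume "i < n"
  then show "mat_vec n (\<lambda>i j. \<i> * t * cycle_laplacian n i j) x i = \<i> * complex_of_real (t * \<theta>) * x i"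
    unfolding mat_vec_scale using eigen by simp
qed

lemma fourier_cycle_U:
  fixes z :: complex
  assumes "3 \<le> n" "z ^ n = 1"
  shows "(\<Sum>l<n. z ^ l * mat_vec n (cycle_U n t) y l) = cis (t * (2 - 2 * Re z)) * (\<Sum>l<n. z ^ l * y l)"
  unfolding cycle_U_def cis_conv_exp
proof (rule mat_exp_left_eigenvector)
  fix j assume "j < n"
  have "(\<Sum>l<n. z ^ l * (\<i> * t * cycle_laplacian n l j)) = \<i> * t * mat_vec n (cycle_laplacian n) (\<lambda>l. z ^ l) j"
    by (simp add: mat_vec_def sum_distrib_left cycle_laplacian_sym[of n j] mult_ac)
  then show "(\<Sum>l<n. z ^ l * (\<i> * t * cycle_laplacian n l j)) = \<i> * complex_of_real (t * (2 - 2 * Re z)) * z ^ j"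
    using mat_vec_cycle_laplacian_root_of_unity[OF assms(1) \<open>j < n\<close> assms(2)] by simp
qed

definition unit_root :: "nat \<Rightarrow> complex" where
  "unit_root n = cis (2 * pi / real n)"

lemma unit_root_power: "unit_root n ^ k = cis (2 * pi * real k / real n)"
  by (simp add: unit_root_def DeMoivre mult_ac)

lemma norm_unit_root [simp]: "norm (unit_root n) = 1"
  by (simp add: unit_root_def)

lemma unit_root_power_self: "0 < n \<Longrightarrow> unit_root n ^ n = 1"
  by (simp add: unit_root_power)

lemma unit_root_power_root: "0 < n \<Longrightarrow> (unit_root n ^ k) ^ n = 1"
  by (simp add: power_mult_swap[of "unit_root n" k n] unit_root_power_self)

lemma unit_root_power_mod: "0 < n \<Longrightarrow> unit_root n ^ (j mod n) = unit_root n ^ j"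
  by (metis mod_mult_div_eq mult.commute power_add power_mult power_one unit_root_power_self
      mult_1_right)

lemma unit_root_power_inj:
  assumes "0 < n" "a < n" "b < n" "unit_root n ^ a = unit_root n ^ b"
  shows "a = b"
  using bij_betw_roots_unity[OF assms(1)] assms(2-4)
  unfolding unit_root_power bij_betw_def inj_on_def by auto

lemma unit_root_power_adj_neq:
  assumes "cycle_adj n x y" "0 < k" "k < n"
  shows "(unit_root n ^ x) ^ k \<noteq> (unit_root n ^ y) ^ k"
proof -
  have "unit_root n ^ k \<noteq> 1"
    using unit_root_power_inj[of n k 0] assms(2,3) by auto
  moreover have "unit_root n \<noteq> 0"
    by (metis norm_unit_root norm_zero zero_neq_one)
  ultimately have neq: "(unit_root n ^ u * unit_root n) ^ k \<noteq> (unit_root n ^ u) ^ k" for u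
    by (simp add: power_mult_distrib)
  have step: "unit_root n ^ (Suc u mod n) = unit_root n ^ u * unit_root n" for u
    using assms(3) by (simp add: unit_root_power_mod)
  have "y = Suc x mod n \<or> x = Suc y mod n"
    using assms(1) by (simp add: cycle_adj_def)
  then show ?thesis
    by (elim disjE) (simp_all add: step neq not_sym[OF neq])
qed

lemma Re_unit_root_power: "Re (unit_root n ^ k) = cos (2 * pi * real k / real n)"
  by (simp add: unit_root_power)

definition cycle_eigenvalue :: "nat \<Rightarrow> nat \<Rightarrow> real" where
  "cycle_eigenvalue n k = 2 - 2 * cos (2 * pi * real k / real n)"

lemma cycle_eigenvalue_reflect:
  assumes "k \<le> n"
  shows "cycle_eigenvalue n (n - k) = cycle_eigenvalue n k"
proof (cases "n = 0")
  case False
  then have "2 * pi * real (n - k) / real n = 2 * pi - 2 * pi * real k / real n"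
    using assms by (simp add: field_simps of_nat_diff)
  then show ?thesis
    by (simp add: cycle_eigenvalue_def)
qed (use assms in auto)

lemma cycle_eigenvalue_two:
  "cycle_eigenvalue n 2 = cycle_eigenvalue n 1 * (2 + 2 * cos (2 * pi / real n))"
proof -
  have "cos (2 * pi * 2 / real n) = 2 * cos (2 * pi / real n) ^ 2 - 1"
    using cos_double_cos[of "2 * pi / real n"] by (simp add: mult_ac)
  then show ?thesis
    by (simp add: cycle_eigenvalue_def algebra_simps power2_eq_square)
qed

lemma fourier_basis_diff:
  assumes "x < n" "y < n"
  shows "(\<Sum>l<n. z ^ l * (std_basis x l - std_basis y l)) = z ^ x - z ^ y"
  using assms
  by (simp add: std_basis_def right_diff_distrib sum_subtractf if_distrib[of "(*) (z ^ _)"]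
      cong: if_cong)

lemma pair_pst_fourier:
  assumes "3 \<le> n" "a < n" "b < n" "c < n" "d < n" "pair_pst n a b c d"
  obtains \<gamma> t where "norm \<gamma> = 1"
    and "\<And>k. cis (t * cycle_eigenvalue n k) * ((unit_root n ^ a) ^ k - (unit_root n ^ b) ^ k)
             = \<gamma> * ((unit_root n ^ c) ^ k - (unit_root n ^ d) ^ k)"
proof -
  obtain t \<gamma> where "norm \<gamma> = 1" and U: "\<And>i. i < n \<Longrightarrow>
      mat_vec n (cycle_U n t) (\<lambda>v. std_basis a v - std_basis b v) i = \<gamma> * (std_basis c i - std_basis d i)"
    using assms(6) unfolding pair_pst_def by blast
  have "cis (t * cycle_eigenvalue n k) * ((unit_root n ^ a) ^ k - (unit_root n ^ b) ^ k)
      = \<gamma> * ((unit_root n ^ c) ^ k - (unit_root n ^ d) ^ k)" for k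
  proof -
    define z where "z = unit_root n ^ k"
    have z_power: "(unit_root n ^ x) ^ k = z ^ x" for x
      unfolding z_def by (rule power_mult_swap)
    have "z ^ n = 1"
      using assms(1) by (simp add: z_def unit_root_power_root)
    then have "cis (t * cycle_eigenvalue n k) * (z ^ a - z ^ b)
        = (\<Sum>l<n. z ^ l * mat_vec n (cycle_U n t) (\<lambda>v. std_basis a v - std_basis b v) l)"
      using fourier_cycle_U[OF assms(1) \<open>z ^ n = 1\<close>] assms(2,3)
      by (simp add: fourier_basis_diff z_def Re_unit_root_power cycle_eigenvalue_def)
    also have "\<dots> = \<gamma> * (z ^ c - z ^ d)"
      using assms(4,5) by (simp add: U sum_distrib_left[symmetric] fourier_basis_diff mult.left_commute)
    finally show ?thesis
      by (simp add: z_power)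
  qed
  then show thesis
    using that[OF \<open>norm \<gamma> = 1\<close>] by blast
qed

section \<open>Rigidity of the transferred pair\<close>

lemma unit_phase_eq_or_opposite:
  fixes E \<gamma> D D' :: complex
  assumes "norm E = 1" "norm \<gamma> = 1" "D \<noteq> 0"
    and "E * D = \<gamma> * D'" "E * cnj D = \<gamma> * cnj D'"
  shows "E = \<gamma> \<or> E = - \<gamma>"
proof -
  have "cnj E * cnj D = cnj \<gamma> * cnj D'"
    using arg_cong[OF assms(4), of cnj] by simp
  then have "\<gamma> * cnj E * cnj D = E * cnj \<gamma> * cnj D"
    using assms(5) by (metis mult.assoc mult.commute)
  then have "\<gamma> * cnj E = E * cnj \<gamma>"
    using \<open>D \<noteq> 0\<close> by simp
  then have "\<gamma> * \<gamma> * (E * cnj E) = E * E * (\<gamma> * cnj \<gamma>)"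
    by (metis mult.assoc mult.left_commute)
  then have "(E - \<gamma>) * (E + \<gamma>) = 0"
    using unit_mult_cnj assms(1,2) by (simp add: algebra_simps)
  then show ?thesis
    by (auto simp: eq_neg_iff_add_eq_0)
qed

text \<open>Unless \<open>x + y = 0\<close>, the identity \<open>cnj (x + y) * (x * y) = x + y\<close> for unit \<open>x, y\<close>
  shows that the sum determines the product, so \<open>{x, y}\<close> is the root set of a known quadratic.\<close>
lemma unit_sum_eq_cases:
  fixes x y z u :: complex
  assumes "norm x = 1" "norm y = 1" "norm z = 1" "norm u = 1" and sum: "x + y = z + u"
  shows "(x = z \<and> y = u) \<or> (x = u \<and> y = z) \<or> (y = - x \<and> u = - z)"
proof (cases "x + y = 0")
  case True
  then show ?thesis
    using sum by (auto simp: add_eq_0_iff)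
next
  case False
  have "cnj (x + y) * (x * y) = x + y" "cnj (z + u) * (z * u) = z + u"
    using unit_mult_cnj assms(1-4) by (simp_all add: algebra_simps)
  then have "x * y = z * u"
    using False sum by (metis complex_cnj_zero_iff mult_left_cancel)
  have "(z - x) * (z - y) = z * z - z * (x + y) + x * y"
    by (simp add: algebra_simps)
  also have "\<dots> = 0"
    using sum \<open>x * y = z * u\<close> by (simp add: algebra_simps)
  finally have "(z - x) * (z - y) = 0" .
  then show ?thesis
    using sum by auto
qed

lemma antipodal_of_equal_differences:
  fixes X Y Z W E \<gamma> :: complex
  assumes units: "norm X = 1" "norm Y = 1" "norm Z = 1" "norm W = 1" "norm E = 1" "norm \<gamma> = 1"
    and "X \<noteq> Y" "\<not> (X = Z \<and> Y = W)" "\<not> (X = W \<and> Y = Z)"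
    and "E * (X - Y) = \<gamma> * (Z - W)" "E * (cnj X - cnj Y) = \<gamma> * (cnj Z - cnj W)"
  shows "(Z = - Y \<and> W = - X) \<or> (Z = - X \<and> W = - Y)"
proof -
  have "\<gamma> \<noteq> 0"
    using units(6) by auto
  have "E = \<gamma> \<or> E = - \<gamma>"
    using unit_phase_eq_or_opposite[of E \<gamma> "X - Y" "Z - W"] assms by simp
  then have "\<gamma> * (X - Y) = \<gamma> * (Z - W) \<or> \<gamma> * (X - Y) = \<gamma> * (W - Z)"
    using assms(10) by (auto simp: algebra_simps)
  then have "X - Y = Z - W \<or> X - Y = W - Z"
    using \<open>\<gamma> \<noteq> 0\<close> by simp
  then have "X + W = Z + Y \<or> X + Z = W + Y"
    by (auto simp: algebra_simps)
  then show ?thesis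
    using unit_sum_eq_cases[OF units(1,4,3,2)] unit_sum_eq_cases[OF units(1,3,4,2)] assms(7-9)
    by auto
qed

lemma antipodal_power_difference:
  fixes X Y Z W :: complex
  assumes "(Z = - Y \<and> W = - X) \<or> (Z = - X \<and> W = - Y)"
  obtains \<sigma> where "\<And>k. Z ^ k - W ^ k = \<sigma> * (-1) ^ k * (X ^ k - Y ^ k)"
  using assms
proof (elim disjE conjE)
  assume "Z = - Y" "W = - X"
  then show thesis
    by (intro that[of "-1"]) (simp add: power_minus[of X] power_minus[of Y] algebra_simps)
next
  assume "Z = - X" "W = - Y"
  then show thesis
    by (intro that[of 1]) (simp add: power_minus[of X] power_minus[of Y] algebra_simps)
qed

lemma fourier_identity_antipodal:
  fixes n :: nat and \<gamma> :: complex
  defines "\<zeta> \<equiv> unit_root n"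
  assumes "3 \<le> n" "a < n" "b < n" "c < n" "d < n" "a \<noteq> b" "{a, b} \<noteq> {c, d}" "norm \<gamma> = 1"
    and F: "\<And>k. cis (t * cycle_eigenvalue n k) * ((\<zeta> ^ a) ^ k - (\<zeta> ^ b) ^ k)
                = \<gamma> * ((\<zeta> ^ c) ^ k - (\<zeta> ^ d) ^ k)"
  shows "(\<zeta> ^ c = - (\<zeta> ^ b) \<and> \<zeta> ^ d = - (\<zeta> ^ a)) \<or> (\<zeta> ^ c = - (\<zeta> ^ a) \<and> \<zeta> ^ d = - (\<zeta> ^ b))"
proof (rule antipodal_of_equal_differences)
  have "0 < n"
    using assms(2) by simp
  have inj: "\<zeta> ^ x = \<zeta> ^ y \<longleftrightarrow> x = y" if "x < n" "y < n" for x y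
    using unit_root_power_inj[OF \<open>0 < n\<close> that] by (auto simp: \<zeta>_def)
  show "\<zeta> ^ a \<noteq> \<zeta> ^ b" "\<not> (\<zeta> ^ a = \<zeta> ^ c \<and> \<zeta> ^ b = \<zeta> ^ d)" "\<not> (\<zeta> ^ a = \<zeta> ^ d \<and> \<zeta> ^ b = \<zeta> ^ c)"
    using assms(3-8) by (auto simp: inj)
  show "norm (\<zeta> ^ a) = 1" "norm (\<zeta> ^ b) = 1" "norm (\<zeta> ^ c) = 1" "norm (\<zeta> ^ d) = 1"
    by (simp_all add: \<zeta>_def norm_power)
  show "norm (cis (t * cycle_eigenvalue n 1)) = 1" "norm \<gamma> = 1"
    using assms(9) by simp_all
  show "cis (t * cycle_eigenvalue n 1) * (\<zeta> ^ a - \<zeta> ^ b) = \<gamma> * (\<zeta> ^ c - \<zeta> ^ d)"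
    using F[of 1] by simp
  have "(\<zeta> ^ x) ^ (n - 1) = cnj (\<zeta> ^ x)" for x
    unfolding \<zeta>_def using \<open>0 < n\<close> by (intro root_of_unity_power_pred unit_root_power_root)
  then show "cis (t * cycle_eigenvalue n 1) * (cnj (\<zeta> ^ a) - cnj (\<zeta> ^ b))
      = \<gamma> * (cnj (\<zeta> ^ c) - cnj (\<zeta> ^ d))"
    using F[of "n - 1"] cycle_eigenvalue_reflect[of 1 n] \<open>0 < n\<close> by simp
qed

lemma pair_pst_alternating_phases:
  assumes "3 \<le> n" "a < n" "b < n" "c < n" "d < n" "a \<noteq> b" "{a, b} \<noteq> {c, d}"
    and "cycle_adj n a b \<or> cycle_adj n c d" and "pair_pst n a b c d"
  shows "even n \<and> (\<exists>t g. \<forall>k. 0 < k \<longrightarrow> k < n \<longrightarrow> cis (t * cycle_eigenvalue n k) = g * (-1) ^ k)"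
proof -
  obtain \<gamma> t where "norm \<gamma> = 1" and F: "\<And>k. cis (t * cycle_eigenvalue n k) *
      ((unit_root n ^ a) ^ k - (unit_root n ^ b) ^ k) = \<gamma> * ((unit_root n ^ c) ^ k - (unit_root n ^ d) ^ k)"
    using pair_pst_fourier[OF assms(1-5,9)] by metis
  define X Y Z W where "X = unit_root n ^ a" and "Y = unit_root n ^ b"
    and "Z = unit_root n ^ c" and "W = unit_root n ^ d"
  have antipodal: "(Z = - Y \<and> W = - X) \<or> (Z = - X \<and> W = - Y)"
    using fourier_identity_antipodal[OF assms(1-7) \<open>norm \<gamma> = 1\<close> F] by (simp add: X_def Y_def Z_def W_def)
  then obtain V where "Z = - V" "V ^ n = 1"
    using assms(1) by (auto simp: X_def Y_def unit_root_power_root)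
  moreover have "Z ^ n = 1"
    using assms(1) by (simp add: Z_def unit_root_power_root)
  ultimately have "(-1) ^ n = (1 :: complex)"
    by (simp add: power_minus[of V n])
  then have "even n"
    by (metis neg_one_odd_power one_neq_neg_one)
  obtain \<sigma> where rel: "\<And>k. Z ^ k - W ^ k = \<sigma> * (-1) ^ k * (X ^ k - Y ^ k)"
    using antipodal_power_difference[OF antipodal] by blast
  have "X ^ k \<noteq> Y ^ k" if "0 < k" "k < n" for k
    using assms(8) unit_root_power_adj_neq[OF _ that] rel[of k] by (auto simp: X_def Y_def Z_def W_def)
  then have "cis (t * cycle_eigenvalue n k) = \<gamma> * \<sigma> * (-1) ^ k" if "0 < k" "k < n" for k
    using F[of k] rel[of k] that by (simp add: X_def Y_def Z_def W_def mult_ac)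
  then show ?thesis
    using \<open>even n\<close> by blast
qed

section \<open>Alternating phases are impossible for \<open>n \<ge> 6\<close>\<close>

lemma two_cos_mult_chebyshev:
  "2 * cos (real (Suc (Suc k)) * \<alpha>) = 2 * cos \<alpha> * (2 * cos (real (Suc k) * \<alpha>)) - 2 * cos (real k * \<alpha>)"
  using cos_add[of "real (Suc k) * \<alpha>" \<alpha>] cos_diff[of "real (Suc k) * \<alpha>" \<alpha>]
  by (simp add: algebra_simps)

lemma two_cos_mult_denominator_cong:
  fixes \<alpha> :: real and P Q :: int
  assumes PQ: "of_int Q * (2 * cos \<alpha>) = of_int P"
  shows "\<exists>j. of_int Q ^ k * (2 * cos (real k * \<alpha>)) = of_int j \<and> (0 < k \<longrightarrow> Q dvd j - P ^ k)"
proof -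
  define y where "y k = 2 * cos (real k * \<alpha>)" for k :: nat
  have chebyshev: "y (Suc (Suc k)) = y 1 * y (Suc k) - y k" for k
    using two_cos_mult_chebyshev by (simp add: y_def)
  have y1: "of_int Q * y 1 = of_int P"
    using PQ by (simp add: y_def)
  define R where "R k \<longleftrightarrow> (\<exists>j. of_int Q ^ k * y k = of_int j \<and> (0 < k \<longrightarrow> Q dvd j - P ^ k))" for k
  have "R k \<and> R (Suc k)" for k
  proof (induction k)
    case 0
    then show ?case
      using y1 unfolding R_def by (auto simp: y_def intro: exI[of _ 2])
  next
    case (Suc k)
    then obtain i j where i: "of_int Q ^ k * y k = of_int i"
      and j: "of_int Q ^ Suc k * y (Suc k) = of_int j" "Q dvd j - P ^ Suc k"
      unfolding R_def by auto
    have "of_int Q ^ Suc (Suc k) * y (Suc (Suc k)) = of_int (P * j - Q ^ 2 * i)"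
      using y1 i j(1) unfolding chebyshev by (simp add: algebra_simps power2_eq_square)
    moreover have "(P * j - Q ^ 2 * i) - P ^ Suc (Suc k) = P * (j - P ^ Suc k) - Q * (Q * i)"
      by (simp add: algebra_simps power2_eq_square)
    then have "Q dvd (P * j - Q ^ 2 * i) - P ^ Suc (Suc k)"
      using j(2) by (simp add: dvd_diff)
    ultimately have "R (Suc (Suc k))"
      unfolding R_def by blast
    then show ?case
      using Suc.IH by blast
  qed
  then show ?thesis
    unfolding R_def y_def by blast
qed

text \<open>A Niven-type lemma: if \<open>2 cos \<alpha> = P / Q\<close> in lowest terms, then \<open>Q\<^sup>n 2 cos (n \<alpha>) \<equiv> P\<^sup>n\<close>
  modulo \<open>Q\<close>, so integrality of \<open>2 cos (n \<alpha>)\<close> forces \<open>Q\<close> to divide \<open>P\<^sup>n\<close>.\<close>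
lemma two_cos_in_Ints_if_rational:
  fixes \<alpha> :: real
  assumes rat: "2 * cos \<alpha> \<in> \<rat>" and "0 < n" and int: "2 * cos (real n * \<alpha>) \<in> \<int>"
  shows "2 * cos \<alpha> \<in> \<int>"
proof -
  obtain P Q :: int where "0 < Q" "coprime P Q" and PQ: "2 * cos \<alpha> = of_int P / of_int Q"
    using Rats_cases'[OF rat] by metis
  then obtain j where j: "of_int Q ^ n * (2 * cos (real n * \<alpha>)) = of_int j" "Q dvd j - P ^ n"
    using two_cos_mult_denominator_cong[of Q \<alpha> P n] \<open>0 < n\<close> by auto
  obtain N where "2 * cos (real n * \<alpha>) = of_int N"
    using int by (auto elim: Ints_cases)
  then have "of_int j = (of_int (Q ^ n * N) :: real)"
    using j(1) by simp
  then have "j = Q ^ n * N"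
    by (simp only: of_int_eq_iff)
  then have "Q dvd P ^ n"
    using dvd_diff[OF _ j(2), of j] \<open>0 < n\<close> by (simp add: dvd_power)
  moreover have "coprime (P ^ n) Q"
    using \<open>coprime P Q\<close> by simp
  ultimately have "is_unit Q"
    using coprime_absorb_right by blast
  then show ?thesis
    using PQ \<open>0 < Q\<close> by simp
qed

lemma two_cos_two_pi_div_Ints:
  assumes "2 * cos (2 * pi / real n) \<in> \<rat>" "0 < n"
  shows "2 * cos (2 * pi / real n) \<in> \<int>"
  using two_cos_in_Ints_if_rational[OF assms] assms(2) by simp

lemma two_cos_two_pi_div_bounds:
  assumes "6 \<le> n"
  shows "1 \<le> 2 * cos (2 * pi / real n)" "2 * cos (2 * pi / real n) < 2"
proof -
  have "0 < 2 * pi / real n" "2 * pi / real n \<le> pi / 3"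
    using assms by (simp_all add: field_simps)
  then have "cos (pi / 3) \<le> cos (2 * pi / real n)" "cos (2 * pi / real n) < cos 0"
    by (intro cos_monotone_0_pi_le cos_monotone_0_pi; simp)+
  then show "1 \<le> 2 * cos (2 * pi / real n)" "2 * cos (2 * pi / real n) < 2"
    by (simp_all add: cos_60)
qed

lemma cis_eq_neg_one_power:
  assumes "cis x = (-1) ^ k"
  obtains s :: int where "x = pi * of_int s" "even (s - int k)"
proof -
  have "cis (x - real k * pi) = 1"
    using assms by (simp add: cis_divide[symmetric] DeMoivre[symmetric])
  then have "cos (x - real k * pi) = 1"
    by (simp add: complex_eq_iff)
  then obtain j :: int where "x - real k * pi = of_int j * 2 * pi"
    by (auto simp: cos_one_2pi_int)
  then have "x = pi * of_int (int k + 2 * j)"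
    by (simp add: algebra_simps)
  then show thesis
    by (rule that) simp
qed

lemma alternating_phase_factor_eq_one:
  assumes "even n" "4 \<le> n"
    and phase: "\<And>k. 0 < k \<Longrightarrow> k < n \<Longrightarrow> cis (t * cycle_eigenvalue n k) = g * (-1) ^ k"
  shows "g = 1"
proof -
  obtain m where n: "n = 2 * m" and "2 \<le> m"
    using assms(1,2) by auto
  have "2 * pi * real (m - 1) / real n = pi - 2 * pi / real n"
    using \<open>2 \<le> m\<close> by (simp add: n field_simps of_nat_diff)
  moreover have "2 * pi * real m / real n = pi"
    using \<open>2 \<le> m\<close> by (simp add: n)
  ultimately have "cycle_eigenvalue n 1 + cycle_eigenvalue n (m - 1) = cycle_eigenvalue n m"
    by (simp add: cycle_eigenvalue_def)
  then have "cis (t * cycle_eigenvalue n 1) * cis (t * cycle_eigenvalue n (m - 1)) = cis (t * cycle_eigenvalue n m)"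
    by (simp add: cis_mult flip: distrib_left)
  then have "- g * (g * (-1) ^ (m - 1)) = g * (-1) ^ m"
    using phase[of 1] phase[of "m - 1"] phase[of m] \<open>2 \<le> m\<close> n by simp
  moreover have "(-1 :: complex) ^ m = - ((-1) ^ (m - 1))"
    using \<open>2 \<le> m\<close> by (cases m) auto
  ultimately have "g * g = g"
    by simp
  moreover have "cis (t * cycle_eigenvalue n 1) = - g"
    using phase[of 1] assms(2) by simp
  then have "g \<noteq> 0"
    by (metis norm_cis norm_minus_cancel norm_zero zero_neq_one)
  ultimately show "g = 1"
    by simp
qed

lemma no_alternating_phases:
  assumes "even n" "6 \<le> n"
    and phase: "\<And>k. 0 < k \<Longrightarrow> k < n \<Longrightarrow> cis (t * cycle_eigenvalue n k) = g * (-1) ^ k"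
  shows False
proof -
  have "g = 1"
    using alternating_phase_factor_eq_one[OF assms(1) _ phase] assms(2) by simp
  then have "cis (t * cycle_eigenvalue n 1) = (-1) ^ 1" "cis (t * cycle_eigenvalue n 2) = (-1) ^ 2"
    using phase[of 1] phase[of 2] assms(2) by simp_all
  then obtain s1 s2 :: int where s1: "t * cycle_eigenvalue n 1 = pi * s1" "even (s1 - int 1)"
    and s2: "t * cycle_eigenvalue n 2 = pi * s2" "even (s2 - int 2)"
    by (meson cis_eq_neg_one_power)
  define y where "y = 2 * cos (2 * pi / real n)"
  have "pi * s2 = t * cycle_eigenvalue n 1 * (2 + y)"
    using s2(1) cycle_eigenvalue_two[of n] by (simp add: y_def mult.assoc)
  also have "\<dots> = pi * (s1 * (2 + y))"
    using s1(1) by simp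
  finally have "s2 = s1 * (2 + y)"
    by simp
  then have sy: "s1 * y = s2 - 2 * s1"
    by (simp add: algebra_simps)
  moreover have "s1 \<noteq> 0"
    using s1(2) by auto
  ultimately have "y = of_int (s2 - 2 * s1) / of_int s1"
    by (simp add: field_simps)
  then have "y \<in> \<int>"
    using two_cos_two_pi_div_Ints[of n] assms(2) by (simp add: y_def)
  then obtain P where P: "y = of_int P"
    by (auto elim: Ints_cases)
  then have "of_int (s1 * P) = (of_int (s2 - 2 * s1) :: real)"
    using sy by simp
  then have "s1 * P = s2 - 2 * s1"
    by (simp only: of_int_eq_iff)
  moreover have "even (s2 - 2 * s1)" "odd s1"
    using s1(2) s2(2) by presburger+
  ultimately have "even P"
    by (metis even_mult_iff)
  moreover have "P = 1"
    using two_cos_two_pi_div_bounds[OF assms(2)] P unfolding y_def by linarith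
  ultimately show False
    by simp
qed

section \<open>The 4-cycle\<close>

lemma pair_pst_C4: "pair_pst 4 0 1 2 3"
proof -
  define U where "U = cycle_U 4 (pi / 2)"
  define p :: "nat \<Rightarrow> complex" where "p j = (-1) ^ j / 2" for j
  define q :: "nat \<Rightarrow> complex" where "q j = (if j = 0 \<or> j = 3 then 1 / 2 else - 1 / 2)" for j
  have cases4: "i < 4 \<longleftrightarrow> i = 0 \<or> i = 1 \<or> i = 2 \<or> i = 3" for i :: nat
    by auto
  have "mat_vec 4 (cycle_laplacian 4) p i = 4 * p i" "mat_vec 4 (cycle_laplacian 4) q i = 2 * q i"
    if "i < 4" for i
    using that mat_vec_cycle_laplacian[of 4 i] unfolding cases4
    by (auto simp: p_def q_def cycle_next_def cycle_prev_def)
  then have Up: "mat_vec 4 U p i = p i" and Uq: "mat_vec 4 U q i = - q i" if "i < 4" for i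
    using cycle_U_eigenvector[OF that, of p 4 "pi / 2"] cycle_U_eigenvector[OF that, of q 2 "pi / 2"]
    by (simp_all add: U_def)
  have "mat_vec 4 U (\<lambda>v. std_basis 0 v - std_basis 1 v) i = 1 * (std_basis 2 i - std_basis 3 i)"
    if "i < 4" for i
  proof -
    have "mat_vec 4 U (\<lambda>v. std_basis 0 v - std_basis 1 v) i = mat_vec 4 U (\<lambda>v. p v + q v) i"
      by (rule mat_vec_cong) (auto simp: cases4 p_def q_def std_basis_def)
    also have "\<dots> = p i - q i"
      using Up Uq that by (simp add: mat_vec_add)
    also have "\<dots> = 1 * (std_basis 2 i - std_basis 3 i)"
      using that unfolding cases4 by (auto simp: p_def q_def std_basis_def)
    finally show ?thesis .
  qed
  then show ?thesis
    unfolding pair_pst_def U_def by (intro exI[of _ "pi / 2"] exI[of _ 1]) simp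
qed

theorem mainTheorem5:
  fixes n :: nat
  assumes "n \<ge> 3"
  shows "(\<exists>a b c d. a < n \<and> b < n \<and> c < n \<and> d < n \<and> a \<noteq> b \<and> c \<noteq> d \<and>
            {a, b} \<noteq> {c, d} \<and> (cycle_adj n a b \<or> cycle_adj n c d) \<and> pair_pst n a b c d)
         \<longleftrightarrow> n = 4"
proof
  assume "\<exists>a b c d. a < n \<and> b < n \<and> c < n \<and> d < n \<and> a \<noteq> b \<and> c \<noteq> d \<and>
            {a, b} \<noteq> {c, d} \<and> (cycle_adj n a b \<or> cycle_adj n c d) \<and> pair_pst n a b c d"
  then obtain a b c d where "a < n" "b < n" "c < n" "d < n" "a \<noteq> b" "{a, b} \<noteq> {c, d}"
    "cycle_adj n a b \<or> cycle_adj n c d" "pair_pst n a b c d"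
    by blast
  then have "even n \<and> (\<exists>t g. \<forall>k. 0 < k \<longrightarrow> k < n \<longrightarrow> cis (t * cycle_eigenvalue n k) = g * (-1) ^ k)"
    by (intro pair_pst_alternating_phases assms)
  then obtain t g where "even n"
    and phase: "\<And>k. 0 < k \<Longrightarrow> k < n \<Longrightarrow> cis (t * cycle_eigenvalue n k) = g * (-1) ^ k"
    by blast
  show "n = 4"
  proof (rule ccontr)
    assume "n \<noteq> 4"
    with \<open>even n\<close> assms have "6 \<le> n"
      by presburger
    then show False
      using no_alternating_phases[OF \<open>even n\<close> _ phase] by blast
  qed
next
  assume "n = 4"
  moreover have "cycle_adj 4 0 1"
    by (simp add: cycle_adj_def)
  moreover have "{0, 1} \<noteq> {2, 3 :: nat}"
    by (simp add: doubleton_eq_iff)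
  ultimately show "\<exists>a b c d. a < n \<and> b < n \<and> c < n \<and> d < n \<and> a \<noteq> b \<and> c \<noteq> d \<and>
            {a, b} \<noteq> {c, d} \<and> (cycle_adj n a b \<or> cycle_adj n c d) \<and> pair_pst n a b c d"
    using pair_pst_C4 by (intro exI[of _ 0] exI[of _ 1] exI[of _ 2] exI[of _ 3]) simp
qed

end
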